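(* Let $T>0$, $N=2$, $1<M<2$. Consider minimizing $\mathbb V(T)=\frac12(\xi_1(T)^2+\xi_2(T)^2)$ over $\alpha\in\mathcal U_M$, where $\dot\xi_i=-\xi_i+(1-\alpha_i)\bar\xi$, $\bar\xi=\frac12(\xi_1+\xi_2)$, with $\bar\xi(0)>0$ and $\xi_1(0)>\xi_2(0)$. Let $\alpha$ be an optimal control whose trajectory satisfies $\xi_1(t)\ge\xi_2(t)$ for all $t$, and let $(\lambda_1,\lambda_2)$ be the corresponding covectors given by the Pontryagin maximum principle: $$\dot\lambda_1=\tfrac{1+\alpha_1}{2}\lambda_1-\tfrac{1-\alpha_2}{2}\lambda_2,\quad \dot\lambda_2=\tfrac{1+\alpha_2}{2}\lambda_2-\tfrac{1-\alpha_1}{2}\lambda_1,\quad \lambda(T)=(\xi_1(T),\xi_2(T)),$$ and for almost every $t$, $\alpha(t)$ minimizes $a\mapsto-\bar\xi(t)(a_1\lambda_1(t)+a_2\lambda_2(t))$ over $a\in[0,1]^2$, $a_1+a_2\le M$. Then: (i) if $\lambda_2(T)>0$, then $\lambda_1(t)>0$ and $\lambda_2(t)>0$ for all $t\in[0,T]$; (ii) if $\lambda_2(T)=0$, then $\lambda_1(t)>0$ and $\lambda_2(t)=0$ for all $t\in[0,T]$; (iii) if $\lambda_2(T)<0$, then $\lambda_2(t)<0$ for all $t\in[0,T]$.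
   Context: $\mathcal U_M$ is the set of measurable $\alpha:[0,T]\to[0,1]^2$ with $\alpha_1+\alpha_2\le M$. *)

theory Defs
  imports "HOL-Analysis.Analysis"
begin

definition U_M :: "real \<Rightarrow> real \<Rightarrow> (real \<Rightarrow> real \<times> real) set" where
  "U_M T M = {\<alpha>. \<alpha> \<in> borel_measurable (restrict_space lebesgue {0..T}) \<and>
     (\<forall>t\<in>{0..T}. 0 \<le> fst (\<alpha> t) \<and> fst (\<alpha> t) \<le> 1 \<and> 0 \<le> snd (\<alpha> t) \<and> snd (\<alpha> t) \<le> 1
        \<and> fst (\<alpha> t) + snd (\<alpha> t) \<le> M)}"

definition xibar :: "real \<times> real \<Rightarrow> real" where
  "xibar x = (fst x + snd x) / 2"

definition dyn :: "real \<times> real \<Rightarrow> real \<times> real \<Rightarrow> real \<times> real" where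
  "dyn a x = (- fst x + (1 - fst a) * xibar x, - snd x + (1 - snd a) * xibar x)"

definition adj :: "real \<times> real \<Rightarrow> real \<times> real \<Rightarrow> real \<times> real" where
  "adj a l = ((1 + fst a) / 2 * fst l - (1 - snd a) / 2 * snd l,
              (1 + snd a) / 2 * snd l - (1 - fst a) / 2 * fst l)"

text \<open>Caratheodory (absolutely continuous / integral-form) solution on [0,T].\<close>
definition solves :: "real \<Rightarrow> (real \<times> real \<Rightarrow> real \<times> real \<Rightarrow> real \<times> real)
    \<Rightarrow> (real \<Rightarrow> real \<times> real) \<Rightarrow> (real \<Rightarrow> real \<times> real) \<Rightarrow> bool" where
  "solves T f \<alpha> x \<longleftrightarrow> continuous_on {0..T} x \<and>
     (\<forall>t\<in>{0..T}. ((\<lambda>s. f (\<alpha> s) (x s)) has_integral (x t - x 0)) {0..t})"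

definition cost :: "real \<times> real \<Rightarrow> real" where
  "cost x = (fst x ^ 2 + snd x ^ 2) / 2"

definition optimal :: "real \<Rightarrow> real \<Rightarrow> (real \<Rightarrow> real \<times> real) \<Rightarrow> (real \<Rightarrow> real \<times> real) \<Rightarrow> bool" where
  "optimal T M \<alpha> \<xi> \<longleftrightarrow> \<alpha> \<in> U_M T M \<and> solves T dyn \<alpha> \<xi> \<and>
     (\<forall>\<beta> \<eta>. \<beta> \<in> U_M T M \<and> solves T dyn \<beta> \<eta> \<and> \<eta> 0 = \<xi> 0 \<longrightarrow> cost (\<xi> T) \<le> cost (\<eta> T))"

end

theory Submission
  imports Defs
begin

text \<open>
  The gap \<open>\<lambda>\<^sub>1 - \<lambda>\<^sub>2\<close> satisfies \<open>(\<lambda>\<^sub>1 - \<lambda>\<^sub>2)' = \<lambda>\<^sub>1 - \<lambda>\<^sub>2\<close> whatever the control,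
  so it keeps the sign of \<open>\<xi>\<^sub>1(T) - \<xi>\<^sub>2(T) \<ge> 0\<close>; moreover the mean \<open>m = (\<xi>\<^sub>1 + \<xi>\<^sub>2) / 2\<close>
  stays positive because \<open>m' = -(\<alpha>\<^sub>1 + \<alpha>\<^sub>2) m / 2\<close>. Wherever \<open>\<lambda>\<^sub>1 > 0\<close> and \<open>\<lambda>\<^sub>1 > \<lambda>\<^sub>2\<close>, the minimum
  condition then forces \<open>\<alpha>\<^sub>1 = 1\<close>, which kills the \<open>\<lambda>\<^sub>1\<close>-term in the equation for \<open>\<lambda>\<^sub>2\<close>:
  it becomes \<open>\<lambda>\<^sub>2' = (1 + \<alpha>\<^sub>2) \<lambda>\<^sub>2 / 2\<close>, and \<open>\<lambda>\<^sub>2\<close> keeps its sign backwards in time.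
  All sign-preservation steps are Gronwall-type arguments for Caratheodory solutions,
  carried out on intervals of length at most \<open>1/2\<close>, where the integral of the derivative
  cannot compensate the value of the function.
\<close>

lemma has_integral_increment:
  fixes g y :: "real \<Rightarrow> 'a::banach"
  assumes I: "\<forall>t\<in>{a..b}. (g has_integral (y t - y a)) {a..t}"
    and "a \<le> t" "t \<le> u" "u \<le> b"
  shows "(g has_integral (y u - y t)) {t..u}"
proof -
  have "g integrable_on {a..u}" using I assms by auto
  then have "g integrable_on {t..u}" by (rule integrable_subinterval_real) (use assms in auto)
  then obtain J where J: "(g has_integral J) {t..u}" by blast
  have "(g has_integral ((y t - y a) + J)) {a..u}"
    by (rule has_integral_combine[OF \<open>a \<le> t\<close> \<open>t \<le> u\<close> _ J]) (use I assms in auto)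
  moreover have "(g has_integral (y u - y a)) {a..u}" using I assms by auto
  ultimately have "(y t - y a) + J = y u - y a" by (rule has_integral_unique)
  then have "J = y u - y t" by (simp add: algebra_simps)
  then show ?thesis using J by simp
qed

lemma has_integral_increments_uminus:
  fixes g y :: "real \<Rightarrow> 'a::banach"
  assumes "\<forall>t\<in>{a..b}. (g has_integral (y t - y a)) {a..t}"
  shows "\<forall>t\<in>{a..b}. ((\<lambda>s. - g s) has_integral (- y t - - y a)) {a..t}"
proof
  fix t assume "t \<in> {a..b}"
  with assms have "(g has_integral (y t - y a)) {a..t}" by blast
  from has_integral_neg[OF this]
  show "((\<lambda>s. - g s) has_integral (- y t - - y a)) {a..t}" by (simp add: algebra_simps)
qed

lemma vanish_on_short_interval:
  fixes y g :: "real \<Rightarrow> real"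
  assumes "p \<le> q" "q - p \<le> 1/2" "continuous_on {p..q} y"
    and I: "\<And>t. t \<in> {p..q} \<Longrightarrow> (g has_integral (y q - y t)) {t..q}"
    and N: "negligible N" and bound: "\<And>s. s \<in> {p..q} - N \<Longrightarrow> \<bar>g s\<bar> \<le> \<bar>y s\<bar>"
    and "y q = 0"
  shows "\<forall>t\<in>{p..q}. y t = 0"
proof -
  have "continuous_on {p..q} (\<lambda>t. \<bar>y t\<bar>)" using assms(3) by (intro continuous_intros)
  then obtain v where v: "v \<in> {p..q}" "\<And>t. t \<in> {p..q} \<Longrightarrow> \<bar>y t\<bar> \<le> \<bar>y v\<bar>"
    using continuous_attains_sup[of "{p..q}" "\<lambda>t. \<bar>y t\<bar>"] assms(1) by auto
  define g' where "g' = (\<lambda>s. if s \<in> N then 0 else g s)"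
  have "(g' has_integral (y q - y v)) {v..q}"
    by (rule has_integral_spike[OF N _ I[OF v(1)]]) (auto simp: g'_def)
  moreover have "norm (g' s) \<le> \<bar>y v\<bar>" if "s \<in> {v..q} - {}" for s
  proof -
    have "s \<in> {p..q}" using that v by auto
    then show ?thesis using bound[of s] v(2)[of s] by (auto simp: g'_def)
  qed
  ultimately have "norm (y q - y v) \<le> \<bar>y v\<bar> * measure lborel {v..q}"
    by (intro has_integral_bound_real) auto
  then have "\<bar>y v\<bar> \<le> \<bar>y v\<bar> * (q - v)" using v \<open>y q = 0\<close> by simp
  also have "\<dots> \<le> \<bar>y v\<bar> * (1/2)" using v assms(2) by (intro mult_left_mono) auto
  finally have "\<bar>y v\<bar> = 0" by simp
  then show ?thesis using v(2) by fastforce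
qed

text \<open>At the supremum \<open>t\<^sub>1\<close> of the points where \<open>y \<noteq> 0\<close> we have \<open>y(t\<^sub>1) = 0\<close>, so \<open>|y| < c\<close>
  near \<open>t\<^sub>1\<close> and the previous lemma applies on a short interval ending at \<open>t\<^sub>1\<close>.\<close>
lemma vanish_backward:
  fixes y g :: "real \<Rightarrow> real"
  assumes C: "continuous_on {a..b} y"
    and I: "\<forall>t\<in>{a..b}. (g has_integral (y t - y a)) {a..t}"
    and N: "negligible N" and "c > 0"
    and bound: "\<And>s. s \<in> {a..b} - N \<Longrightarrow> \<bar>y s\<bar> < c \<Longrightarrow> \<bar>g s\<bar> \<le> \<bar>y s\<bar>"
    and yb: "y b = 0"
  shows "\<forall>t\<in>{a..b}. y t = 0"
proof (rule ccontr)
  assume nonzero: "\<not> ?thesis"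
  define S where "S = {t\<in>{a..b}. y t \<noteq> 0}"
  have ne: "S \<noteq> {}" using nonzero by (auto simp: S_def)
  have bd: "bdd_above S" by (auto simp: S_def bdd_above_def)
  define t1 where "t1 = Sup S"
  have t1b: "t1 \<le> b" unfolding t1_def using ne by (intro cSup_least) (auto simp: S_def)
  obtain s0 where "s0 \<in> S" using ne by auto
  then have "s0 \<le> t1" unfolding t1_def using bd by (rule cSup_upper)
  then have t1a: "a \<le> t1" using \<open>s0 \<in> S\<close> by (auto simp: S_def)
  have after: "y t = 0" if "t \<in> {t1<..b}" for t
  proof (rule ccontr)
    assume "y t \<noteq> 0"
    then have "t \<in> S" using that t1a by (auto simp: S_def)
    then have "t \<le> t1" unfolding t1_def using bd by (rule cSup_upper)
    then show False using that by auto
  qed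
  have yt1: "y t1 = 0"
  proof (cases "t1 = b")
    case False
    define Z where "Z = {a..b} \<inter> y -` {0}"
    have "closed Z" unfolding Z_def by (rule continuous_closed_preimage[OF C]) auto
    moreover have "{t1<..b} \<subseteq> Z" using after t1a by (auto simp: Z_def)
    ultimately have "closure {t1<..b} \<subseteq> Z" by (simp add: closure_minimal)
    then have "t1 \<in> Z" using False t1b by auto
    then show ?thesis by (simp add: Z_def)
  qed (use yb in simp)
  obtain \<delta> where \<delta>: "\<delta> > 0" "\<And>s. s \<in> {a..b} \<Longrightarrow> dist s t1 < \<delta> \<Longrightarrow> dist (y s) (y t1) < c"
    using C \<open>c > 0\<close> t1a t1b unfolding continuous_on_iff by (metis atLeastAtMost_iff)
  have "t1 - min \<delta> (1/2) < Sup S" using \<delta> by (simp add: t1_def)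
  then obtain t0 where t0: "t0 \<in> S" "t1 - min \<delta> (1/2) < t0" using less_cSup_iff[OF ne bd] by auto
  have "t0 \<le> t1" unfolding t1_def using bd t0(1) by (simp add: cSup_upper)
  have t0a: "a \<le> t0" using t0(1) by (auto simp: S_def)
  have "\<forall>t\<in>{t0..t1}. y t = 0"
  proof (rule vanish_on_short_interval[of t0 t1 y g N])
    show "t1 - t0 \<le> 1/2" using t0 by simp
    show "continuous_on {t0..t1} y" using C by (rule continuous_on_subset) (use t0a t1b in auto)
    show "(g has_integral (y t1 - y t)) {t..t1}" if "t \<in> {t0..t1}" for t
      using has_integral_increment[OF I, of t t1] that t0a t1b by auto
    show "\<bar>g s\<bar> \<le> \<bar>y s\<bar>" if s: "s \<in> {t0..t1} - N" for s
    proof -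
      have "s \<in> {a..b}" using s t0a t1b by auto
      moreover have "dist s t1 < \<delta>" using s t0 by (auto simp: dist_real_def)
      ultimately have "\<bar>y s\<bar> < c" using \<delta>(2)[of s] yt1 by (simp add: dist_real_def)
      then show ?thesis using bound[of s] s t0a t1b by auto
    qed
  qed (use N yt1 \<open>t0 \<le> t1\<close> in auto)
  then show False using t0(1) \<open>t0 \<le> t1\<close> by (auto simp: S_def)
qed

lemma no_entry_into_negative_short:
  fixes y g :: "real \<Rightarrow> real"
  assumes "p < q" "q - p \<le> 1/2" "continuous_on {p..q} y"
    and I: "\<And>t. t \<in> {p..q} \<Longrightarrow> (g has_integral (y t - y p)) {p..t}"
    and N: "negligible N" and bound: "\<And>s. s \<in> {p..q} - N \<Longrightarrow> y s < 0 \<Longrightarrow> y s \<le> g s"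
    and "y p \<ge> 0" and neg: "\<And>t. t \<in> {p<..q} \<Longrightarrow> y t < 0"
  shows False
proof -
  obtain v where v: "v \<in> {p..q}" "\<And>t. t \<in> {p..q} \<Longrightarrow> y v \<le> y t"
    using continuous_attains_inf[of "{p..q}" y] assms(1,3) by auto
  define m where "m = y v"
  have "m < 0" using v(2)[of q] neg[of q] assms(1) by (auto simp: m_def)
  then have vp: "p < v" using v \<open>y p \<ge> 0\<close> by (cases "v = p") (auto simp: m_def)
  define g' where "g' = (\<lambda>s. if s \<in> N \<union> {p} then m else g s)"
  have "(g' has_integral (y v - y p)) {p..v}"
    by (rule has_integral_spike[OF _ _ I[OF v(1)], where S="N \<union> {p}"]) (auto simp: g'_def N)
  moreover have "((\<lambda>_. m) has_integral (measure lborel {p..v} *\<^sub>R m)) {p..v}" by blast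
  moreover have "m \<le> g' s" if s: "s \<in> {p..v}" for s
  proof (cases "s \<in> N \<union> {p}")
    case False
    then have "s \<in> {p<..q}" "s \<in> {p..q} - N" using s v by auto
    then have "y s \<le> g s" using bound neg by auto
    moreover have "m \<le> y s" using v(2)[of s] s v unfolding m_def by auto
    ultimately show ?thesis using False by (simp add: g'_def)
  qed (simp add: g'_def)
  ultimately have "measure lborel {p..v} *\<^sub>R m \<le> y v - y p" by (metis has_integral_le)
  then have "(v - p) * m \<le> m - y p" using vp by (simp add: m_def)
  moreover have "(1/2) * m \<le> (v - p) * m"
    using \<open>m < 0\<close> v assms(2) by (intro mult_right_mono_neg) auto
  ultimately show False using \<open>m < 0\<close> \<open>y p \<ge> 0\<close> by linarith
qed

text \<open>Apply the previous lemma just after the last point where \<open>y \<ge> 0\<close>.\<close>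
lemma negative_backward:
  fixes y g :: "real \<Rightarrow> real"
  assumes C: "continuous_on {a..b} y"
    and I: "\<forall>t\<in>{a..b}. (g has_integral (y t - y a)) {a..t}"
    and N: "negligible N" and bound: "\<And>s. s \<in> {a..b} - N \<Longrightarrow> y s < 0 \<Longrightarrow> y s \<le> g s"
    and "y b < 0"
  shows "\<forall>t\<in>{a..b}. y t < 0"
proof (rule ccontr)
  assume nonneg: "\<not> ?thesis"
  define S where "S = {a..b} \<inter> y -` {0..}"
  have ne: "S \<noteq> {}" using nonneg by (auto simp: S_def not_less)
  have bd: "bdd_above S" by (auto simp: S_def bdd_above_def)
  have "closed S" unfolding S_def by (rule continuous_closed_preimage[OF C]) auto
  define t1 where "t1 = Sup S"
  have "t1 \<in> S" using closed_contains_Sup[OF ne bd \<open>closed S\<close>] by (simp add: t1_def)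
  then have t1: "a \<le> t1" "t1 \<le> b" "y t1 \<ge> 0" by (auto simp: S_def)
  then have "t1 < b" using \<open>y b < 0\<close> by (cases "t1 = b") auto
  have after: "y t < 0" if "t \<in> {t1<..b}" for t
  proof (rule ccontr)
    assume "\<not> y t < 0"
    then have "t \<in> S" using that t1 by (auto simp: S_def)
    then have "t \<le> t1" unfolding t1_def using bd by (rule cSup_upper)
    then show False using that by auto
  qed
  define q where "q = min b (t1 + 1/2)"
  show False
  proof (rule no_entry_into_negative_short[of t1 q y g N])
    show "t1 < q" using \<open>t1 < b\<close> by (simp add: q_def)
    show "q - t1 \<le> 1/2" unfolding q_def by linarith
    show "continuous_on {t1..q} y" using C by (rule continuous_on_subset) (auto simp: q_def t1)
    show "(g has_integral (y t - y t1)) {t1..t}" if "t \<in> {t1..q}" for t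
      using has_integral_increment[OF I, of t1 t] that t1 by (auto simp: q_def)
    show "y s \<le> g s" if "s \<in> {t1..q} - N" "y s < 0" for s
      using bound[of s] that t1 by (auto simp: q_def)
    show "y t < 0" if "t \<in> {t1<..q}" for t using after[of t] that by (auto simp: q_def)
  qed (use N t1 in auto)
qed

lemma maximizer_saturates_dominant:
  fixes x w c1 c2 M :: real
  assumes "0 \<le> x" "x \<le> 1" "0 \<le> w" "w \<le> 1" "x + w \<le> M" "1 < M" "0 < c1" "c2 < c1"
    and max: "\<And>a1 a2. 0 \<le> a1 \<Longrightarrow> a1 \<le> 1 \<Longrightarrow> 0 \<le> a2 \<Longrightarrow> a2 \<le> 1 \<Longrightarrow> a1 + a2 \<le> M
               \<Longrightarrow> a1 * c1 + a2 * c2 \<le> x * c1 + w * c2"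
  shows "x = 1"
proof (rule ccontr)
  assume "x \<noteq> 1"
  then have "x < 1" using assms by simp
  show False
  proof (cases "w \<ge> 1 - x")
    case True
    have "1 * c1 + (w - (1 - x)) * c2 \<le> x * c1 + w * c2" using True assms by (intro max) auto
    then have "(1 - x) * (c1 - c2) \<le> 0" by (simp add: algebra_simps)
    moreover have "(1 - x) * (c1 - c2) > 0" using \<open>x < 1\<close> assms by (intro mult_pos_pos) auto
    ultimately show False by simp
  next
    case False
    have "1 * c1 + 0 * c2 \<le> x * c1 + w * c2" using assms by (intro max) auto
    moreover have "w * c2 \<le> w * c1" using assms by (intro mult_left_mono) auto
    moreover have "(x + w) * c1 < 1 * c1" using False assms by (intro mult_strict_right_mono) auto
    ultimately show False by (simp add: algebra_simps)
  qed
qed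

lemma U_M_bounds:
  assumes "\<alpha> \<in> U_M T M" "t \<in> {0..T}"
  shows "0 \<le> fst (\<alpha> t)" "fst (\<alpha> t) \<le> 1" "0 \<le> snd (\<alpha> t)" "snd (\<alpha> t) \<le> 1"
    and "fst (\<alpha> t) + snd (\<alpha> t) \<le> M"
  using assms by (auto simp: U_M_def)

lemma solves_bounded_linear:
  assumes "solves T f \<alpha> x" "bounded_linear L"
  shows "continuous_on {0..T} (\<lambda>t. L (x t))"
    and "\<forall>t\<in>{0..T}. ((\<lambda>s. L (f (\<alpha> s) (x s))) has_integral (L (x t) - L (x 0))) {0..t}"
proof -
  show "continuous_on {0..T} (\<lambda>t. L (x t))"
    using assms(1) by (auto simp: solves_def intro: bounded_linear.continuous_on[OF assms(2)])
  show "\<forall>t\<in>{0..T}. ((\<lambda>s. L (f (\<alpha> s) (x s))) has_integral (L (x t) - L (x 0))) {0..t}"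
  proof
    fix t assume "t \<in> {0..T}"
    then have "((\<lambda>s. f (\<alpha> s) (x s)) has_integral (x t - x 0)) {0..t}"
      using assms(1) by (auto simp: solves_def)
    from has_integral_linear[OF this assms(2)]
    show "((\<lambda>s. L (f (\<alpha> s) (x s))) has_integral (L (x t) - L (x 0))) {0..t}"
      by (simp add: o_def linear_diff[OF bounded_linear.linear[OF assms(2)]])
  qed
qed

lemma bounded_linear_xibar: "bounded_linear xibar"
  unfolding xibar_def
  using bounded_linear_compose[OF bounded_linear_divide[of 2] bounded_linear_add[OF bounded_linear_fst bounded_linear_snd]]
  by simp

lemma bounded_linear_gap: "bounded_linear (\<lambda>p :: real \<times> real. fst p - snd p)"
  by (intro bounded_linear_intros)

lemma xibar_dyn: "xibar (dyn a x) = - (fst a + snd a) / 2 * xibar x"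
  by (simp add: xibar_def dyn_def field_simps)

lemma adj_gap: "fst (adj a l) - snd (adj a l) = fst l - snd l"
  by (simp add: adj_def field_simps)

lemma xibar_positive:
  assumes "\<alpha> \<in> U_M T M" "solves T dyn \<alpha> \<xi>" "xibar (\<xi> 0) > 0"
  shows "\<forall>t\<in>{0..T}. xibar (\<xi> t) > 0"
proof (rule ccontr)
  let ?g = "\<lambda>s. - (fst (\<alpha> s) + snd (\<alpha> s)) / 2 * xibar (\<xi> s)"
  have C: "continuous_on {0..T} (\<lambda>t. xibar (\<xi> t))"
    and I: "\<forall>t\<in>{0..T}. (?g has_integral (xibar (\<xi> t) - xibar (\<xi> 0))) {0..t}"
    using solves_bounded_linear[OF assms(2) bounded_linear_xibar]
    by (simp_all add: xibar_dyn)
  assume "\<not> ?thesis"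
  then obtain t0 where t0: "t0 \<in> {0..T}" "xibar (\<xi> t0) \<le> 0" by (auto simp: not_less)
  then obtain z where z: "0 \<le> z" "z \<le> t0" "xibar (\<xi> z) = 0"
    using IVT2'[of "\<lambda>t. xibar (\<xi> t)" t0 0 0] assms(3) continuous_on_subset[OF C] by fastforce
  have "\<forall>t\<in>{0..z}. xibar (\<xi> t) = 0"
  proof (rule vanish_backward[of 0 z "\<lambda>t. xibar (\<xi> t)" ?g "{}" 1])
    show "continuous_on {0..z} (\<lambda>t. xibar (\<xi> t))"
      by (rule continuous_on_subset[OF C]) (use z t0 in auto)
    show "\<forall>t\<in>{0..z}. (?g has_integral (xibar (\<xi> t) - xibar (\<xi> 0))) {0..t}"
      using I z t0 by auto
    show "\<bar>?g s\<bar> \<le> \<bar>xibar (\<xi> s)\<bar>" if "s \<in> {0..z} - {}" for s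
    proof -
      have "s \<in> {0..T}" using that z t0 by auto
      then have "\<bar>(fst (\<alpha> s) + snd (\<alpha> s)) / 2\<bar> \<le> 1" using U_M_bounds[OF assms(1), of s] by auto
      have "\<bar>?g s\<bar> = \<bar>(fst (\<alpha> s) + snd (\<alpha> s)) / 2\<bar> * \<bar>xibar (\<xi> s)\<bar>"
        by (simp only: abs_mult abs_divide abs_minus_cancel)
      also have "\<dots> \<le> \<bar>xibar (\<xi> s)\<bar>"
        using \<open>\<bar>(fst (\<alpha> s) + snd (\<alpha> s)) / 2\<bar> \<le> 1\<close> by (intro mult_left_le_one_le) auto
      finally show ?thesis .
    qed
  qed (use z in auto)
  then show False using z assms(3) by auto
qed

lemma costate_gap_has_integral:
  assumes "solves T adj \<alpha> lam"
  shows "continuous_on {0..T} (\<lambda>t. fst (lam t) - snd (lam t))"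
    and "\<forall>t\<in>{0..T}. ((\<lambda>s. fst (lam s) - snd (lam s)) has_integral
           ((fst (lam t) - snd (lam t)) - (fst (lam 0) - snd (lam 0)))) {0..t}"
  using solves_bounded_linear[OF assms bounded_linear_gap]
  by (simp_all add: adj_gap)

lemma costate_gap_positive:
  assumes "solves T adj \<alpha> lam" "T \<ge> 0" "snd (lam T) < fst (lam T)"
  shows "\<forall>t\<in>{0..T}. snd (lam t) < fst (lam t)"
proof -
  let ?d = "\<lambda>t. fst (lam t) - snd (lam t)"
  note C = costate_gap_has_integral(1)[OF assms(1)]
    and I = costate_gap_has_integral(2)[OF assms(1)]
  have "\<forall>t\<in>{0..T}. - ?d t < 0"
  proof (rule negative_backward[of 0 T "\<lambda>t. - ?d t" "\<lambda>t. - ?d t" "{}"])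
    show "continuous_on {0..T} (\<lambda>t. - ?d t)" using C by (rule continuous_on_minus)
    show "\<forall>t\<in>{0..T}. ((\<lambda>t. - ?d t) has_integral (- ?d t - - ?d 0)) {0..t}"
      using has_integral_increments_uminus[OF I] .
  qed (use assms(3) in auto)
  then show ?thesis by auto
qed

lemma costate_gap_nonneg:
  assumes "solves T adj \<alpha> lam" "T \<ge> 0" "snd (lam T) \<le> fst (lam T)"
  shows "\<forall>t\<in>{0..T}. snd (lam t) \<le> fst (lam t)"
proof (cases "snd (lam T) = fst (lam T)")
  case True
  have "\<forall>t\<in>{0..T}. fst (lam t) - snd (lam t) = 0"
    using costate_gap_has_integral[OF assms(1)] True
    by (intro vanish_backward[where N="{}" and c=1]) auto
  then show ?thesis by auto
next
  case False
  then show ?thesis using costate_gap_positive[OF assms(1,2)] assms(3) by force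
qed

lemma costate_snd_has_integral:
  assumes "solves T adj \<alpha> lam"
  shows "continuous_on {0..T} (\<lambda>t. snd (lam t))"
    and "\<forall>t\<in>{0..T}. ((\<lambda>s. (1 + snd (\<alpha> s)) / 2 * snd (lam s) - (1 - fst (\<alpha> s)) / 2 * fst (lam s))
           has_integral (snd (lam t) - snd (lam 0))) {0..t}"
  using solves_bounded_linear[OF assms bounded_linear_snd] by (simp_all add: adj_def)

lemma first_control_saturated:
  assumes "1 < M" "\<alpha> \<in> U_M T M" "\<forall>t\<in>{0..T}. xibar (\<xi> t) > 0"
    and "AE t in lebesgue. t \<in> {0..T} \<longrightarrow>
          (\<forall>a1 a2. 0 \<le> a1 \<and> a1 \<le> 1 \<and> 0 \<le> a2 \<and> a2 \<le> 1 \<and> a1 + a2 \<le> M \<longrightarrow>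
             - xibar (\<xi> t) * (fst (\<alpha> t) * fst (lam t) + snd (\<alpha> t) * snd (lam t))
             \<le> - xibar (\<xi> t) * (a1 * fst (lam t) + a2 * snd (lam t)))"
  obtains N where "negligible N"
    and "\<And>s. s \<in> {0..T} - N \<Longrightarrow> 0 < fst (lam s) \<Longrightarrow> snd (lam s) < fst (lam s) \<Longrightarrow> fst (\<alpha> s) = 1"
proof -
  obtain N where N: "negligible N" and min: "\<And>t. t \<notin> N \<Longrightarrow> t \<in> {0..T} \<longrightarrow>
          (\<forall>a1 a2. 0 \<le> a1 \<and> a1 \<le> 1 \<and> 0 \<le> a2 \<and> a2 \<le> 1 \<and> a1 + a2 \<le> M \<longrightarrow>
             - xibar (\<xi> t) * (fst (\<alpha> t) * fst (lam t) + snd (\<alpha> t) * snd (lam t))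
             \<le> - xibar (\<xi> t) * (a1 * fst (lam t) + a2 * snd (lam t)))"
    using assms(4) unfolding eventually_ae_filter_negligible by blast
  have "fst (\<alpha> s) = 1"
    if s: "s \<in> {0..T} - N" and "0 < fst (lam s)" "snd (lam s) < fst (lam s)" for s
  proof (rule maximizer_saturates_dominant[OF U_M_bounds[OF assms(2)] \<open>1 < M\<close> that(2,3)])
    fix a1 a2 :: real
    assume "0 \<le> a1" "a1 \<le> 1" "0 \<le> a2" "a2 \<le> 1" "a1 + a2 \<le> M"
    then have "- xibar (\<xi> s) * (fst (\<alpha> s) * fst (lam s) + snd (\<alpha> s) * snd (lam s))
               \<le> - xibar (\<xi> s) * (a1 * fst (lam s) + a2 * snd (lam s))"
      using min[of s] s by auto
    moreover have "xibar (\<xi> s) > 0" using assms(3) s by auto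
    ultimately show "a1 * fst (lam s) + a2 * snd (lam s) \<le> fst (\<alpha> s) * fst (lam s) + snd (\<alpha> s) * snd (lam s)"
      by simp
  qed (use s in auto)
  with N show ?thesis using that by blast
qed

lemma costate_positive:
  assumes "\<alpha> \<in> U_M T M" "solves T adj \<alpha> lam"
    and gap: "\<forall>t\<in>{0..T}. snd (lam t) \<le> fst (lam t)" and "0 < snd (lam T)"
  shows "\<forall>t\<in>{0..T}. 0 < fst (lam t) \<and> 0 < snd (lam t)"
proof -
  let ?g = "\<lambda>s. (1 + snd (\<alpha> s)) / 2 * snd (lam s) - (1 - fst (\<alpha> s)) / 2 * fst (lam s)"
  note C = costate_snd_has_integral(1)[OF assms(2)]
    and I = costate_snd_has_integral(2)[OF assms(2)]
  have "\<forall>t\<in>{0..T}. - snd (lam t) < 0"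
  proof (rule negative_backward[of 0 T "\<lambda>t. - snd (lam t)" "\<lambda>s. - ?g s" "{}"])
    show "continuous_on {0..T} (\<lambda>t. - snd (lam t))" using C by (rule continuous_on_minus)
    show "\<forall>t\<in>{0..T}. ((\<lambda>s. - ?g s) has_integral (- snd (lam t) - - snd (lam 0))) {0..t}"
      using has_integral_increments_uminus[OF I] .
    show "- snd (lam s) \<le> - ?g s" if s: "s \<in> {0..T} - {}" "- snd (lam s) < 0" for s
    proof -
      note bounds = U_M_bounds[OF assms(1), of s]
      have "snd (lam s) \<le> fst (lam s)" using gap s by blast
      then have "0 \<le> fst (lam s)" using s(2) by linarith
      then have "0 \<le> (1 - fst (\<alpha> s)) / 2 * fst (lam s)" using bounds s by simp
      moreover have "(1 + snd (\<alpha> s)) / 2 * snd (lam s) \<le> 1 * snd (lam s)"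
        using bounds s by (intro mult_right_mono) auto
      ultimately show ?thesis by simp
    qed
  qed (use assms(4) in auto)
  then show ?thesis using gap by force
qed

lemma costate_snd_zero:
  assumes "\<alpha> \<in> U_M T M" "solves T adj \<alpha> lam" "0 \<le> T"
    and "negligible N"
    and saturated: "\<And>s. s \<in> {0..T} - N \<Longrightarrow> 0 < fst (lam s) \<Longrightarrow> snd (lam s) < fst (lam s)
                      \<Longrightarrow> fst (\<alpha> s) = 1"
    and gap: "\<forall>t\<in>{0..T}. snd (lam t) < fst (lam t)" and "snd (lam T) = 0"
  shows "\<forall>t\<in>{0..T}. 0 < fst (lam t) \<and> snd (lam t) = 0"
proof -
  note C = costate_snd_has_integral(1)[OF assms(2)]
    and I = costate_snd_has_integral(2)[OF assms(2)]
  obtain v where v: "v \<in> {0..T}"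
    and v_min: "\<And>t. t \<in> {0..T} \<Longrightarrow> fst (lam v) - snd (lam v) \<le> fst (lam t) - snd (lam t)"
    using continuous_attains_inf[of "{0..T}" "\<lambda>t. fst (lam t) - snd (lam t)"]
      costate_gap_has_integral(1)[OF assms(2)] \<open>0 \<le> T\<close> by auto
  \<comment> \<open>While \<open>|\<lambda>\<^sub>2|\<close> stays below the minimal gap, \<open>\<lambda>\<^sub>1 > 0\<close>, so \<open>\<alpha>\<^sub>1 = 1\<close>.\<close>
  have "\<forall>t\<in>{0..T}. snd (lam t) = 0"
  proof (rule vanish_backward[OF C I \<open>negligible N\<close>, of "fst (lam v) - snd (lam v)"])
    show "0 < fst (lam v) - snd (lam v)" using gap v by auto
    fix s assume s: "s \<in> {0..T} - N" "\<bar>snd (lam s)\<bar> < fst (lam v) - snd (lam v)"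
    then have "0 < fst (lam s)" using v_min[of s] by auto
    then have "fst (\<alpha> s) = 1" using saturated[OF s(1)] gap s by auto
    moreover have "\<bar>(1 + snd (\<alpha> s)) / 2 * snd (lam s)\<bar> \<le> \<bar>snd (lam s)\<bar>"
      unfolding abs_mult using U_M_bounds[OF assms(1), of s] s by (intro mult_left_le_one_le) auto
    ultimately show "\<bar>(1 + snd (\<alpha> s)) / 2 * snd (lam s) - (1 - fst (\<alpha> s)) / 2 * fst (lam s)\<bar>
                     \<le> \<bar>snd (lam s)\<bar>"
      by simp
  qed (use assms(7) in auto)
  then show ?thesis using gap by force
qed

lemma costate_snd_negative:
  assumes "\<alpha> \<in> U_M T M" "solves T adj \<alpha> lam"
    and "negligible N"
    and saturated: "\<And>s. s \<in> {0..T} - N \<Longrightarrow> 0 < fst (lam s) \<Longrightarrow> snd (lam s) < fst (lam s)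
                      \<Longrightarrow> fst (\<alpha> s) = 1"
    and "snd (lam T) < 0"
  shows "\<forall>t\<in>{0..T}. snd (lam t) < 0"
proof (rule negative_backward[OF costate_snd_has_integral[OF assms(2)] \<open>negligible N\<close>])
  fix s assume s: "s \<in> {0..T} - N" "snd (lam s) < 0"
  note bounds = U_M_bounds[OF assms(1), of s]
  have "1 * snd (lam s) \<le> (1 + snd (\<alpha> s)) / 2 * snd (lam s)"
    using bounds s by (intro mult_right_mono_neg) auto
  moreover have "(1 - fst (\<alpha> s)) / 2 * fst (lam s) \<le> 0"
  proof (cases "0 < fst (lam s)")
    case True
    then show ?thesis using saturated[OF s(1) True] s by simp
  next
    case False
    then show ?thesis using bounds s by (intro mult_nonneg_nonpos) auto
  qed
  ultimately show "snd (lam s) \<le> (1 + snd (\<alpha> s)) / 2 * snd (lam s) - (1 - fst (\<alpha> s)) / 2 * fst (lam s)"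
    by simp
qed (fact \<open>snd (lam T) < 0\<close>)

theorem proposition7:
  fixes T M :: real and \<alpha> \<xi> lam :: "real \<Rightarrow> real \<times> real"
  assumes "T > 0" and "1 < M" and "M < 2"
    and "xibar (\<xi> 0) > 0" and "fst (\<xi> 0) > snd (\<xi> 0)"
    and "optimal T M \<alpha> \<xi>"
    and "\<forall>t\<in>{0..T}. fst (\<xi> t) \<ge> snd (\<xi> t)"
    and "solves T adj \<alpha> lam" and "lam T = \<xi> T"
    and "AE t in lebesgue. t \<in> {0..T} \<longrightarrow>
          (\<forall>a1 a2. 0 \<le> a1 \<and> a1 \<le> 1 \<and> 0 \<le> a2 \<and> a2 \<le> 1 \<and> a1 + a2 \<le> M \<longrightarrow>
             - xibar (\<xi> t) * (fst (\<alpha> t) * fst (lam t) + snd (\<alpha> t) * snd (lam t))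
             \<le> - xibar (\<xi> t) * (a1 * fst (lam t) + a2 * snd (lam t)))"
  shows "(snd (lam T) > 0 \<longrightarrow> (\<forall>t\<in>{0..T}. fst (lam t) > 0 \<and> snd (lam t) > 0))
       \<and> (snd (lam T) = 0 \<longrightarrow> (\<forall>t\<in>{0..T}. fst (lam t) > 0 \<and> snd (lam t) = 0))
       \<and> (snd (lam T) < 0 \<longrightarrow> (\<forall>t\<in>{0..T}. snd (lam t) < 0))"
proof -
  have T: "0 \<le> T" "T \<in> {0..T}" using \<open>T > 0\<close> by auto
  have \<alpha>: "\<alpha> \<in> U_M T M" and \<xi>: "solves T dyn \<alpha> \<xi>" using \<open>optimal T M \<alpha> \<xi>\<close> by (auto simp: optimal_def)
  note lam = \<open>solves T adj \<alpha> lam\<close>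
  have \<xi>_pos: "\<forall>t\<in>{0..T}. xibar (\<xi> t) > 0" using xibar_positive[OF \<alpha> \<xi> \<open>xibar (\<xi> 0) > 0\<close>] .
  obtain N where "negligible N"
    and saturated: "\<And>s. s \<in> {0..T} - N \<Longrightarrow> 0 < fst (lam s) \<Longrightarrow> snd (lam s) < fst (lam s)
                     \<Longrightarrow> fst (\<alpha> s) = 1"
    using first_control_saturated[OF \<open>1 < M\<close> \<alpha> \<xi>_pos assms(10)] by blast
  have sum_T: "0 < fst (lam T) + snd (lam T)"
    using \<xi>_pos T \<open>lam T = \<xi> T\<close> by (auto simp: xibar_def)
  have gap: "\<forall>t\<in>{0..T}. snd (lam t) \<le> fst (lam t)"
    using costate_gap_nonneg[OF lam T(1)] assms(7,9) T by auto
  have gap_pos: "\<forall>t\<in>{0..T}. snd (lam t) < fst (lam t)" if "snd (lam T) \<le> 0"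
    using costate_gap_positive[OF lam T(1)] sum_T that by auto
  show ?thesis
    using costate_positive[OF \<alpha> lam gap]
      costate_snd_zero[OF \<alpha> lam T(1) \<open>negligible N\<close> saturated gap_pos]
      costate_snd_negative[OF \<alpha> lam \<open>negligible N\<close> saturated]
    by auto
qed

end
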